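(* Let $\alpha_1,\dots,\alpha_n\in\Gamma$ be linearly independent over $\mathbb{R}$. Let $A$ be the $n\times n$ matrix of $1$-forms defined in the context, fix $i\neq j$ in $\{1,\dots,n\}$, and fix an integer $p\ge3$. Suppose that either $\operatorname{len}(\alpha_j-\alpha_i)\ge p$, or both of the following hold: (Q) for all $k\notin\{i,j\}$, $$\langle\alpha_j,\alpha_i\rangle\langle\alpha_j-\alpha_k,\alpha_k-\alpha_i\rangle=\langle\alpha_j,\alpha_k\rangle\langle\alpha_k,\alpha_i\rangle;$$ (V) for every ordered pair $(\beta,\gamma)$ of nonzero elements of $\Gamma$ with $\beta+\gamma=\alpha_j-\alpha_i$ that is not of the form $(\alpha_j-\alpha_k,\alpha_k-\alpha_i)$ or $(\alpha_k-\alpha_i,\alpha_j-\alpha_k)$ for some $k\notin\{i,j\}$, one has $\langle\beta,\gamma\rangle f^\beta f^\gamma\in(\mathbf{s})^p$. Then the $(j,i)$ entry of the curvature matrix $F=dA+A\wedge A$ lies in $(\mathbf{s})^p$, i.e. it vanishes modulo terms of order at least $p$ in $\mathbf{s}$.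
   Context: Let $\Gamma\cong\mathbb{Z}^n$ be a lattice with basis $[S_1],\dots,[S_n]$, and let $\langle-,-\rangle:\Gamma\times\Gamma\to\mathbb{Z}$ be a skew-symmetric bilinear form. For $\alpha=\sum_i a_i[S_i]$ set $\operatorname{len}(\alpha)=\sum_i|a_i|$. Let $U\subset\operatorname{Hom}(\Gamma,\mathbb{C})$ be a connected open set; for $\alpha\in\Gamma$, $Z(\alpha)$ is a linear holomorphic function on $U$. Let $\mathbf{s}=(s_1,\dots,s_n)$ be formal variables, and let $R$ be the ring of formal power series in $\mathbf{s}$ with coefficients holomorphic on $U$. Differential forms with coefficients in $R$ are power series in $\mathbf{s}$ whose coefficients are holomorphic forms, and $d$ acts coefficientwise. $(\mathbf{s})^p$ denotes the series (or forms) all of whose monomials have total degree at least $p$. Let $\{f^\alpha\}_{\alpha\in\Gamma\setminus\{0\}}\subset R$ satisfy: (i) $f^\alpha\in(\mathbf{s})^{\operatorname{len}(\alpha)}$; (ii) if $f^\alpha\neq0$ then $Z(\alpha)$ is nowhere zero on $U$; (iii) the Joyce PDE $$df^\alpha=-\sum_{\beta+\gamma=\alpha,\ \beta,\gamma\neq0}(-1)^{\langle\beta,\gamma\rangle}\langle\beta,\gamma\rangle f^\beta f^\gamma\, d\log Z(\beta)$$ holds. Here the sum is over ordered pairs and is $\mathbf{s}$-adically convergent by (i). Given $\alpha_1,\dots,\alpha_n$, define the $n\times n$ matrix of $1$-forms $A$ by $A_{kk}=0$ and, for $k\neq l$, $$A_{kl}=(-1)^{\langle\alpha_k,\alpha_l\rangle}\langle\alpha_k,\alpha_l\rangle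 f^{\alpha_k-\alpha_l}\,d\log Z(\alpha_k-\alpha_l),$$ with $A_{kl}=0$ when $f^{\alpha_k-\alpha_l}=0$. *)

theory Defs
  imports "HOL-Analysis.Analysis"
begin

text \<open>The lattice Gamma = Z^n is int^'n (basis [S_l] = axis vectors), so
  CARD('n) = n.  Hom(Gamma,C) is identified with complex^'n via u = (u([S_l]))_l.
  The formal variables s_l are indexed by 'n; a monomial is an exponent vector 'n => nat.
  An element of R (power series in s with coefficients holomorphic on U) is a map
  monomial => (complex^'n => complex); only values on U matter.
  A 1-form  sum_l w_l du_l  (series-valued) is stored by its coefficients w m l;
  a 2-form is stored by its antisymmetric coefficient matrix w m k l
  (i.e. the form (1/2) sum_{k,l} w_{kl} du_k wedge du_l).\<close>

type_synonym 'n mono = "'n \<Rightarrow> nat"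
type_synonym 'n ser = "'n mono \<Rightarrow> complex^'n \<Rightarrow> complex"
type_synonym 'n form1 = "'n mono \<Rightarrow> 'n \<Rightarrow> complex^'n \<Rightarrow> complex"
type_synonym 'n form2 = "'n mono \<Rightarrow> 'n \<Rightarrow> 'n \<Rightarrow> complex^'n \<Rightarrow> complex"

definition skew_bilinear :: "(int^'n \<Rightarrow> int^'n \<Rightarrow> int) \<Rightarrow> bool" where
  "skew_bilinear bf \<longleftrightarrow>
     (\<forall>a b c. bf (a + b) c = bf a c + bf b c) \<and>
     (\<forall>a b c. bf a (b + c) = bf a b + bf a c) \<and>
     (\<forall>a b. bf a b = - bf b a)"

definition mdeg :: "('n::finite) mono \<Rightarrow> nat" where
  "mdeg m = (\<Sum>l\<in>UNIV. m l)"

definition lenG :: "int^('n::finite) \<Rightarrow> nat" where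
  "lenG a = nat (\<Sum>l\<in>UNIV. \<bar>a$l\<bar>)"

definition Zc :: "int^('n::finite) \<Rightarrow> complex^'n \<Rightarrow> complex" where
  "Zc a u = (\<Sum>l\<in>UNIV. of_int (a$l) * u$l)"

definition dlogZ :: "int^('n::finite) \<Rightarrow> 'n \<Rightarrow> complex^'n \<Rightarrow> complex" where
  "dlogZ a k u = of_int (a$k) / Zc a u"

definition holo_on :: "(complex^('n::finite)) set \<Rightarrow> (complex^'n \<Rightarrow> complex) \<Rightarrow> bool" where
  "holo_on U g \<longleftrightarrow> (\<forall>x\<in>U. \<exists>D. (g has_derivative D) (at x) \<and>
                        (\<forall>c v. D (\<chi> l. c * v$l) = c * D v))"

definition cpartial :: "'n \<Rightarrow> (complex^('n::finite) \<Rightarrow> complex) \<Rightarrow> complex^'n \<Rightarrow> complex" where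
  "cpartial k g x = deriv (\<lambda>z. g (\<chi> l. if l = k then z else x$l)) (x$k)"

definition ser_mult :: "('n::finite) ser \<Rightarrow> 'n ser \<Rightarrow> 'n ser" where
  "ser_mult f g m x = (\<Sum>m1\<in>{m1. \<forall>r. m1 r \<le> m r}. f m1 x * g (\<lambda>r. m r - m1 r) x)"

definition in_sp :: "(complex^('n::finite)) set \<Rightarrow> nat \<Rightarrow> 'n ser \<Rightarrow> bool" where
  "in_sp U p g \<longleftrightarrow> (\<forall>m. mdeg m < p \<longrightarrow> (\<forall>x\<in>U. g m x = 0))"

definition in_sp2 :: "(complex^('n::finite)) set \<Rightarrow> nat \<Rightarrow> 'n form2 \<Rightarrow> bool" where
  "in_sp2 U p w \<longleftrightarrow> (\<forall>m k l. mdeg m < p \<longrightarrow> (\<forall>x\<in>U. w m k l x = 0))"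

definition ser_nonzero :: "(complex^('n::finite)) set \<Rightarrow> 'n ser \<Rightarrow> bool" where
  "ser_nonzero U g \<longleftrightarrow> (\<exists>m. \<exists>x\<in>U. g m x \<noteq> 0)"

definition ext_d :: "('n::finite) form1 \<Rightarrow> 'n form2" where
  "ext_d w m k l x = cpartial k (w m l) x - cpartial l (w m k) x"

definition wedge :: "('n::finite) form1 \<Rightarrow> 'n form1 \<Rightarrow> 'n form2" where
  "wedge a b m k l x = (\<Sum>m1\<in>{m1. \<forall>r. m1 r \<le> m r}.
      a m1 k x * b (\<lambda>r. m r - m1 r) l x - a m1 l x * b (\<lambda>r. m r - m1 r) k x)"

definition sgnpow :: "int \<Rightarrow> complex" where
  "sgnpow z = (-1::complex) powi z"

definition joyce_pde :: "(int^('n::finite) \<Rightarrow> int^'n \<Rightarrow> int) \<Rightarrow> (complex^'n) set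
     \<Rightarrow> (int^'n \<Rightarrow> 'n ser) \<Rightarrow> bool" where
  "joyce_pde bf U f \<longleftrightarrow>
     (\<forall>a. a \<noteq> 0 \<longrightarrow> (\<forall>m. \<forall>x\<in>U. \<forall>k.
        cpartial k (f a m) x =
          - (\<Sum>\<^sub>\<infinity>b\<in>{b. b \<noteq> 0 \<and> a - b \<noteq> 0}.
               sgnpow (bf b (a - b)) * of_int (bf b (a - b))
               * ser_mult (f b) (f (a - b)) m x * dlogZ b k x)))"

definition lin_indep_R :: "('n::finite \<Rightarrow> int^'n) \<Rightarrow> bool" where
  "lin_indep_R \<alpha> \<longleftrightarrow>
     (\<forall>c::'n \<Rightarrow> real. (\<Sum>k\<in>UNIV. c k *\<^sub>R (\<chi> l. real_of_int (\<alpha> k $ l))) = 0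
        \<longrightarrow> (\<forall>k. c k = 0))"

definition Amat :: "(int^('n::finite) \<Rightarrow> int^'n \<Rightarrow> int) \<Rightarrow> (complex^'n) set
     \<Rightarrow> (int^'n \<Rightarrow> 'n ser) \<Rightarrow> ('n \<Rightarrow> int^'n) \<Rightarrow> 'n \<Rightarrow> 'n \<Rightarrow> 'n form1" where
  "Amat bf U f \<alpha> k l = (\<lambda>m r x.
     if k = l \<or> \<not> ser_nonzero U (f (\<alpha> k - \<alpha> l)) then 0
     else sgnpow (bf (\<alpha> k) (\<alpha> l)) * of_int (bf (\<alpha> k) (\<alpha> l))
          * f (\<alpha> k - \<alpha> l) m x * dlogZ (\<alpha> k - \<alpha> l) r x)"

definition curv :: "(int^('n::finite) \<Rightarrow> int^'n \<Rightarrow> int) \<Rightarrow> (complex^'n) set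
     \<Rightarrow> (int^'n \<Rightarrow> 'n ser) \<Rightarrow> ('n \<Rightarrow> int^'n) \<Rightarrow> 'n \<Rightarrow> 'n \<Rightarrow> 'n form2" where
  "curv bf U f \<alpha> k l = (\<lambda>m r s x.
     ext_d (Amat bf U f \<alpha> k l) m r s x
     + (\<Sum>q\<in>UNIV. wedge (Amat bf U f \<alpha> k q) (Amat bf U f \<alpha> q l) m r s x))"

end

theory Submission
  imports Defs
begin

text \<open>In the curvature entry F j i = d A j i + \<Sum>k A j k \<and> A k i, the coefficient of
  A k l is f (\<alpha> k - \<alpha> l), which lies in (s)^len(\<alpha> k - \<alpha> l). Since len is subadditive,
  every term of F j i has s-degree at least len(\<alpha> j - \<alpha> i), which settles the first case.
  Otherwise the Joyce PDE expresses d f (\<alpha> j - \<alpha> i) through products f \<beta> f \<gamma> with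
  \<beta> + \<gamma> = \<alpha> j - \<alpha> i. Modulo (s)^p, (V) leaves only the splittings through some \<alpha> k,
  and each of them cancels A j k \<and> A k i: condition (Q) matches the coefficients, and
  (d log Z \<beta> - d log Z \<gamma>) \<and> d log Z(\<beta> + \<gamma>) = d log Z \<beta> \<and> d log Z \<gamma>.
  This computation needs Z(\<alpha> j - \<alpha> i) \<noteq> 0; if f (\<alpha> j - \<alpha> i) vanishes then A j i = 0,
  and the remaining continuous terms vanish off the hyperplane Z(\<alpha> j - \<alpha> i) = 0, hence everywhere.\<close>

section \<open>Partial derivatives along coordinate lines\<close>

definition coord_line :: "complex^('n::finite) \<Rightarrow> 'n \<Rightarrow> complex \<Rightarrow> complex^'n" where
  "coord_line x r z = (\<chi> l. if l = r then z else x$l)"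

lemma coord_line_self [simp]: "coord_line x r (x$r) = x"
  by (simp add: coord_line_def vec_eq_iff)

lemma cpartial_coord_line: "cpartial r g x = deriv (\<lambda>z. g (coord_line x r z)) (x$r)"
  by (simp add: cpartial_def coord_line_def)

lemma coord_line_has_derivative:
  fixes x :: "complex^'n::finite"
  shows "(coord_line x r has_derivative axis r) (at z)"
proof -
  have "bounded_linear (axis r :: complex \<Rightarrow> complex^'n)"
    by (rule linear_conv_bounded_linear[THEN iffD1], rule linearI) (auto simp: axis_def vec_eq_iff)
  then have "((\<lambda>z. (x - axis r (x$r)) + axis r z) has_derivative (\<lambda>h. 0 + axis r h)) (at z)"
    by (intro has_derivative_add has_derivative_const bounded_linear_imp_has_derivative)
  moreover have "coord_line x r = (\<lambda>z. (x - axis r (x$r)) + axis r z)"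
    by (auto simp: coord_line_def vec_eq_iff axis_def)
  ultimately show ?thesis by simp
qed

lemma holo_on_has_field_derivative_cpartial:
  fixes g :: "complex^'n::finite \<Rightarrow> complex"
  assumes "holo_on U g" "x \<in> U"
  shows "((\<lambda>z. g (coord_line x r z)) has_field_derivative cpartial r g x) (at (x$r))"
proof -
  obtain D where D: "(g has_derivative D) (at x)" "\<And>c v. D (\<chi> l. c * v$l) = c * D v"
    using assms unfolding holo_on_def by blast
  have "((\<lambda>z. g (coord_line x r z)) has_derivative (\<lambda>h. D (axis r h))) (at (x$r))"
    using diff_chain_at[OF coord_line_has_derivative[of x r "x$r"]] D(1)
    by (simp add: comp_def)
  moreover have "(\<lambda>h. D (axis r h)) = (*) (D (axis r 1))"
  proof
    fix h :: complex
    have "axis r h = (\<chi> l. h * axis r 1 $ l)"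
      by (simp add: axis_def vec_eq_iff)
    then show "D (axis r h) = D (axis r 1) * h" by (simp only: D(2) mult.commute)
  qed
  ultimately have deriv: "((\<lambda>z. g (coord_line x r z)) has_field_derivative D (axis r 1)) (at (x$r))"
    by (simp add: has_field_derivative_def)
  then have "cpartial r g x = D (axis r 1)"
    unfolding cpartial_coord_line by (rule DERIV_imp_deriv)
  with deriv show ?thesis by simp
qed

lemma cpartial_cong_open:
  assumes "open U" "x \<in> U" "\<And>y. y \<in> U \<Longrightarrow> g y = h y"
  shows "cpartial r g x = cpartial r h x"
proof -
  have "isCont (coord_line x r) (x$r)"
    using coord_line_has_derivative has_derivative_continuous by blast
  then have "(coord_line x r \<longlongrightarrow> x) (nhds (x$r))"
    using tendsto_at_iff_tendsto_nhds[of "coord_line x r" "x$r"] by (simp add: isCont_def)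
  then have "\<forall>\<^sub>F z in nhds (x$r). coord_line x r z \<in> U"
    using assms(1,2) by (rule topological_tendstoD)
  then have "\<forall>\<^sub>F z in nhds (x$r). g (coord_line x r z) = h (coord_line x r z)"
    by eventually_elim (simp add: assms(3))
  then show ?thesis
    unfolding cpartial_coord_line by (rule deriv_cong_ev) simp
qed

lemma Zc_add: "Zc (a + b) x = Zc a x + Zc b x"
  unfolding Zc_def by (simp add: sum.distrib[symmetric] algebra_simps)

lemma Zc_coord_line: "Zc a (coord_line x r z) = Zc a x + of_int (a$r) * (z - x$r)"
proof -
  have "of_int (a$l) * coord_line x r z $ l - of_int (a$l) * x$l =
          (if l = r then of_int (a$r) * (z - x$r) else 0)" for l
    by (simp add: coord_line_def algebra_simps)
  then have "Zc a (coord_line x r z) - Zc a x = (\<Sum>l\<in>UNIV. if l = r then of_int (a$r) * (z - x$r) else 0)"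
    unfolding Zc_def sum_subtractf[symmetric] by simp
  then show ?thesis by (simp add: algebra_simps)
qed

lemma dlogZ_coord_line_has_field_derivative:
  assumes "Zc a x \<noteq> 0"
  shows "((\<lambda>z. dlogZ a s (coord_line x r z)) has_field_derivative
            - (dlogZ a s x * dlogZ a r x)) (at (x$r))"
proof -
  have "((\<lambda>z. of_int (a$s) / (Zc a x + of_int (a$r) * (z - x$r))) has_field_derivative
          - (of_int (a$s) * of_int (a$r)) / ((Zc a x + of_int (a$r) * (x$r - x$r)) *
               (Zc a x + of_int (a$r) * (x$r - x$r)))) (at (x$r))"
    using assms by (auto intro!: derivative_eq_intros)
  then show ?thesis
    by (simp add: dlogZ_def Zc_coord_line power2_eq_square)
qed

lemma cpartial_mult_dlogZ:
  assumes "holo_on U F" "x \<in> U" "Zc a x \<noteq> 0"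
  shows "cpartial r (\<lambda>y. c * F y * dlogZ a s y) x =
           c * (cpartial r F x * dlogZ a s x - F x * dlogZ a s x * dlogZ a r x)"
proof -
  have "((\<lambda>z. c * F (coord_line x r z) * dlogZ a s (coord_line x r z)) has_field_derivative
          c * (cpartial r F x * dlogZ a s x - F x * dlogZ a s x * dlogZ a r x)) (at (x$r))"
    using DERIV_mult[OF DERIV_cmult[OF holo_on_has_field_derivative_cpartial[OF assms(1,2)]]
                        dlogZ_coord_line_has_field_derivative[OF assms(3)]]
    by (simp add: algebra_simps)
  then show ?thesis
    unfolding cpartial_coord_line by (rule DERIV_imp_deriv)
qed

text \<open>The second-order terms cancel because d (d log Z) = 0.\<close>

lemma ext_d_mult_dlogZ:
  assumes "holo_on U (F m)" "x \<in> U" "Zc a x \<noteq> 0"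
  shows "ext_d (\<lambda>m t y. c * F m y * dlogZ a t y) m r s x =
           c * (cpartial r (F m) x * dlogZ a s x - cpartial s (F m) x * dlogZ a r x)"
  unfolding ext_d_def cpartial_mult_dlogZ[OF assms] by (simp add: algebra_simps)

text \<open>d log Z(b + c) = (Z b d log Z b + Z c d log Z c) / (Z b + Z c) is an affine combination
  of d log Z b and d log Z c.\<close>

lemma dlogZ_add_wedge:
  assumes "Zc b x \<noteq> 0" "Zc c x \<noteq> 0" "Zc (b + c) x \<noteq> 0"
  shows "(dlogZ b r x - dlogZ c r x) * dlogZ (b + c) s x - (dlogZ b s x - dlogZ c s x) * dlogZ (b + c) r x
           = dlogZ b r x * dlogZ c s x - dlogZ b s x * dlogZ c r x"
proof -
  have "(br / B - cr / C) * ((bs + cs) / (B + C)) - (bs / B - cs / C) * ((br + cr) / (B + C))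
          = br / B * (cs / C) - bs / B * (cr / C)"
    if "B \<noteq> 0" "C \<noteq> 0" "B + C \<noteq> 0" for br bs cr cs B C :: complex
  proof -
    have affine: "inverse (B + C) * (inverse B + inverse C) = inverse B * inverse C"
      using that by (simp add: field_simps)
    have "(br / B - cr / C) * ((bs + cs) / (B + C)) - (bs / B - cs / C) * ((br + cr) / (B + C))
            = (br * cs - bs * cr) * (inverse (B + C) * (inverse B + inverse C))"
      by (simp add: divide_inverse algebra_simps)
    also have "\<dots> = br / B * (cs / C) - bs / B * (cr / C)"
      unfolding affine by (simp add: divide_inverse algebra_simps)
    finally show ?thesis .
  qed
  with assms show ?thesis by (simp add: dlogZ_def Zc_add)
qed

lemma continuous_on_eq_0_off_Zc_zeros:
  fixes g :: "complex^'n::finite \<Rightarrow> complex"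
  assumes U: "open U" "x \<in> U" and g: "continuous_on U g" and a: "a \<noteq> 0"
    and vanish: "\<And>z. z \<in> U \<Longrightarrow> Zc a z \<noteq> 0 \<Longrightarrow> g z = 0"
  shows "g x = 0"
proof (cases "Zc a x = 0")
  case True
  obtain l where l: "a$l \<noteq> 0" using a by (auto simp: vec_eq_iff)
  define y where "y n = coord_line x l (x$l + of_real (inverse (real (Suc n))))" for n
  have "isCont (coord_line x l) (x$l)"
    using coord_line_has_derivative has_derivative_continuous by blast
  moreover have "(\<lambda>n. x$l + of_real (inverse (real (Suc n)))) \<longlonglongrightarrow> x$l"
    using tendsto_add[OF tendsto_const tendsto_of_real[OF LIMSEQ_inverse_real_of_nat]]
    by (simp only: of_real_0 add_0_right)
  ultimately have "y \<longlonglongrightarrow> coord_line x l (x$l)"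
    unfolding y_def by (rule isCont_tendsto_compose)
  then have y: "y \<longlonglongrightarrow> x" by simp
  have "\<forall>\<^sub>F n in sequentially. g (y n) = 0"
    using topological_tendstoD[OF y U(1,2)]
  proof eventually_elim
    case (elim n)
    have "Zc a (y n) = of_int (a$l) * of_real (inverse (real (Suc n)))"
      using True by (simp add: y_def Zc_coord_line)
    then have "Zc a (y n) \<noteq> 0" using l by (simp del: of_nat_Suc)
    then show ?case using vanish elim by blast
  qed
  then have "(\<lambda>n. g (y n)) \<longlonglongrightarrow> 0" by (rule tendsto_eventually)
  moreover have "isCont g x" using g U continuous_on_eq_continuous_at by blast
  then have "(\<lambda>n. g (y n)) \<longlonglongrightarrow> g x" using y by (rule isCont_tendsto_compose)
  ultimately show ?thesis using LIMSEQ_unique by blast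
qed (use vanish U in blast)

section \<open>Signs, pairings, degrees and lengths\<close>

definition twist :: "int \<Rightarrow> complex" where
  "twist n = sgnpow n * of_int n"

lemma sgnpow_add: "sgnpow (u + v) = sgnpow u * sgnpow v"
  unfolding sgnpow_def by (rule power_int_add) simp

lemma sgnpow_uminus: "sgnpow (- u) = sgnpow u"
  unfolding sgnpow_def by (simp add: power_int_minus power_int_inverse[symmetric])

lemma twist_uminus: "twist (- u) = - twist u"
  by (simp add: twist_def sgnpow_uminus)

lemma skew_bilinear_diff_left:
  assumes "skew_bilinear bf" shows "bf (x - y) z = bf x z - bf y z"
proof -
  have "bf ((x - y) + y) z = bf (x - y) z + bf y z"
    using assms unfolding skew_bilinear_def by blast
  then show ?thesis by simp
qed

lemma skew_bilinear_diff_right: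
  assumes "skew_bilinear bf" shows "bf z (x - y) = bf z x - bf z y"
proof -
  have "bf z ((x - y) + y) = bf z (x - y) + bf z y"
    using assms unfolding skew_bilinear_def by blast
  then show ?thesis by simp
qed

lemma skew_bilinear_commute: "skew_bilinear bf \<Longrightarrow> bf y x = - bf x y"
  unfolding skew_bilinear_def by blast

lemma skew_bilinear_self: "skew_bilinear bf \<Longrightarrow> bf x x = 0"
  using skew_bilinear_commute[of bf x x] by simp

text \<open>The signs match because \<langle>x - y, y - z\<rangle> + \<langle>x, z\<rangle> = \<langle>x, y\<rangle> + \<langle>y, z\<rangle>;
  the hypothesis matches the magnitudes.\<close>

lemma twist_mult_pairing_triangle:
  assumes "skew_bilinear bf" and "bf x z * bf (x - y) (y - z) = bf x y * bf y z"
  shows "twist (bf x z) * twist (bf (x - y) (y - z)) = twist (bf x y) * twist (bf y z)"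
proof -
  have "bf (x - y) (y - z) + bf x z = bf x y + bf y z"
    using assms(1) by (simp add: skew_bilinear_diff_left skew_bilinear_diff_right
        skew_bilinear_self skew_bilinear_commute[of bf z y])
  then have sign: "sgnpow (bf x z) * sgnpow (bf (x - y) (y - z)) = sgnpow (bf x y) * sgnpow (bf y z)"
    by (simp only: sgnpow_add[symmetric] add.commute)
  have "twist (bf x z) * twist (bf (x - y) (y - z)) =
          (sgnpow (bf x z) * sgnpow (bf (x - y) (y - z))) * of_int (bf x z * bf (x - y) (y - z))"
    unfolding twist_def of_int_mult by (simp only: ac_simps)
  also have "\<dots> = (sgnpow (bf x y) * sgnpow (bf y z)) * of_int (bf x y * bf y z)"
    by (simp only: sign assms(2))
  also have "\<dots> = twist (bf x y) * twist (bf y z)"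
    unfolding twist_def of_int_mult by (simp only: ac_simps)
  finally show ?thesis .
qed

lemma ser_mult_commute: "ser_mult f g m x = ser_mult g f m x"
  unfolding ser_mult_def
  by (rule sum.reindex_bij_witness[where i="\<lambda>m1 r. m r - m1 r" and j="\<lambda>m1 r. m r - m1 r"])
     (auto simp: mult.commute)

lemma ser_nonzero_if_ser_mult_nonzero:
  assumes "x \<in> U" "ser_mult F G m x \<noteq> 0"
  shows "ser_nonzero U F" "ser_nonzero U G"
  using assms unfolding ser_mult_def ser_nonzero_def by (auto intro: sum.neutral)

lemma mdeg_add_diff: "(\<And>r. m1 r \<le> m r) \<Longrightarrow> mdeg m1 + mdeg (\<lambda>r. m r - m1 r) = mdeg m"
  unfolding mdeg_def by (simp add: sum.distrib[symmetric])

lemma lenG_add_le: "lenG (a + b) \<le> lenG a + lenG b"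
proof -
  have "(\<Sum>l\<in>UNIV. \<bar>(a + b)$l\<bar>) \<le> (\<Sum>l\<in>UNIV. \<bar>a$l\<bar>) + (\<Sum>l\<in>UNIV. \<bar>b$l\<bar>)"
    by (simp add: sum.distrib[symmetric] sum_mono abs_triangle_ineq)
  moreover have "0 \<le> (\<Sum>l\<in>UNIV. \<bar>a$l\<bar>)" "0 \<le> (\<Sum>l\<in>UNIV. \<bar>b$l\<bar>)"
    by (auto intro: sum_nonneg)
  ultimately show ?thesis unfolding lenG_def by linarith
qed

lemma lin_indep_R_int_combination:
  assumes "lin_indep_R \<alpha>" "\<And>l. (\<Sum>k\<in>UNIV. c k * \<alpha> k $ l) = 0"
  shows "c k = 0"
proof -
  have "(\<Sum>k\<in>UNIV. real_of_int (c k) *\<^sub>R (\<chi> l. real_of_int (\<alpha> k $ l))) = 0"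
  proof (subst vec_eq_iff, intro allI)
    fix l
    have "real_of_int (\<Sum>k\<in>UNIV. c k * \<alpha> k $ l) = 0" using assms(2) by simp
    then show "(\<Sum>k\<in>UNIV. real_of_int (c k) *\<^sub>R (\<chi> l. real_of_int (\<alpha> k $ l))) $ l = 0 $ l"
      by simp
  qed
  then show ?thesis using assms(1) unfolding lin_indep_R_def by auto
qed

lemma lin_indep_R_inj:
  assumes "lin_indep_R \<alpha>" "k \<noteq> l" shows "\<alpha> k \<noteq> \<alpha> l"
proof
  assume "\<alpha> k = \<alpha> l"
  then have "(\<Sum>t\<in>UNIV. (of_bool (t = k) - of_bool (t = l)) * \<alpha> t $ q) = 0" for q
    by (simp add: left_diff_distrib sum_subtractf of_bool_def if_distrib[of "\<lambda>x. x * _"] cong: if_cong)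
  from lin_indep_R_int_combination[OF assms(1) this, of k] assms(2) show False by simp
qed

lemma lin_indep_R_diff_neq_diff:
  assumes "lin_indep_R \<alpha>" "i \<noteq> j" "k \<noteq> i" "k \<noteq> j" "k' \<noteq> i" "k' \<noteq> j"
  shows "\<alpha> j - \<alpha> k \<noteq> \<alpha> k' - \<alpha> i"
proof
  assume eq: "\<alpha> j - \<alpha> k = \<alpha> k' - \<alpha> i"
  have "\<alpha> j $ q + \<alpha> i $ q - \<alpha> k $ q - \<alpha> k' $ q = 0" for q
    using arg_cong[OF eq, of "\<lambda>v. v $ q"] by simp
  then have "(\<Sum>t\<in>UNIV. (of_bool (t = j) + of_bool (t = i) - of_bool (t = k) - of_bool (t = k')) * \<alpha> t $ q) = 0" for q
    by (simp add: left_diff_distrib distrib_right sum_subtractf sum.distrib of_bool_def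
        if_distrib[of "\<lambda>x. x * _"] cong: if_cong)
  from lin_indep_R_int_combination[OF assms(1) this, of j] assms show False by simp
qed

section \<open>The connection matrix and its curvature\<close>

text \<open>On U the guard ser_nonzero in the definition of A is immaterial: a vanishing series is zero
  on U.\<close>

lemma Amat_apply:
  assumes "k \<noteq> l" "y \<in> U"
  shows "Amat bf U f \<alpha> k l m t y = twist (bf (\<alpha> k) (\<alpha> l)) * f (\<alpha> k - \<alpha> l) m y * dlogZ (\<alpha> k - \<alpha> l) t y"
  using assms by (auto simp: Amat_def twist_def ser_nonzero_def)

lemma Amat_eq_0_below_lenG:
  assumes f_len: "\<forall>a. a \<noteq> 0 \<longrightarrow> in_sp U (lenG a) (f a)"
    and "y \<in> U" "mdeg m < lenG (\<alpha> k - \<alpha> l)"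
  shows "Amat bf U f \<alpha> k l m t y = 0"
proof -
  have "\<alpha> k - \<alpha> l \<noteq> 0" using assms(3) by (auto simp: lenG_def)
  then have "f (\<alpha> k - \<alpha> l) m y = 0" using assms unfolding in_sp_def by blast
  then show ?thesis unfolding Amat_def by simp
qed

lemma Amat_continuous_on:
  assumes f_in_R: "\<forall>a. a \<noteq> 0 \<longrightarrow> (\<forall>m. holo_on U (f a m))"
    and f_Z: "\<forall>a. a \<noteq> 0 \<longrightarrow> ser_nonzero U (f a) \<longrightarrow> (\<forall>x\<in>U. Zc a x \<noteq> 0)"
    and indep: "lin_indep_R \<alpha>"
  shows "continuous_on U (Amat bf U f \<alpha> k l m t)"
proof (cases "k = l \<or> \<not> ser_nonzero U (f (\<alpha> k - \<alpha> l))")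
  case True then show ?thesis unfolding Amat_def by (auto intro: continuous_on_const)
next
  case False
  then have a: "\<alpha> k - \<alpha> l \<noteq> 0" using lin_indep_R_inj[OF indep] by auto
  have "continuous_on U (f (\<alpha> k - \<alpha> l) m)"
    using f_in_R a unfolding holo_on_def
    by (meson continuous_at_imp_continuous_on has_derivative_continuous)
  moreover have "continuous_on U (Zc (\<alpha> k - \<alpha> l))"
    unfolding Zc_def by (intro continuous_intros)
  ultimately have "continuous_on U (\<lambda>x. sgnpow (bf (\<alpha> k) (\<alpha> l)) * of_int (bf (\<alpha> k) (\<alpha> l))
          * f (\<alpha> k - \<alpha> l) m x * dlogZ (\<alpha> k - \<alpha> l) t x)"
    using f_Z a False unfolding dlogZ_def by (intro continuous_intros) auto
  then show ?thesis using False unfolding Amat_def by simp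
qed

lemma wedge_eq_0_below_degree:
  assumes "\<And>m1 t. mdeg m1 < d1 \<Longrightarrow> a m1 t x = 0" "\<And>m2 t. mdeg m2 < d2 \<Longrightarrow> b m2 t x = 0"
    and "mdeg m < d1 + d2"
  shows "wedge a b m r s x = 0"
  unfolding wedge_def
proof (rule sum.neutral, intro ballI)
  fix m1 assume "m1 \<in> {m1. \<forall>r. m1 r \<le> m r}"
  then have "mdeg m1 < d1 \<or> mdeg (\<lambda>r. m r - m1 r) < d2"
    using mdeg_add_diff[of m1 m] assms(3) by auto
  then show "a m1 r x * b (\<lambda>q. m q - m1 q) s x - a m1 s x * b (\<lambda>q. m q - m1 q) r x = 0"
    using assms(1,2) by auto
qed

lemma wedge_mult_dlogZ:
  "wedge (\<lambda>m t y. c * F m y * dlogZ a t y) (\<lambda>m t y. d * G m y * dlogZ b t y) m r s x =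
     c * d * ser_mult F G m x * (dlogZ a r x * dlogZ b s x - dlogZ a s x * dlogZ b r x)"
  unfolding wedge_def ser_mult_def sum_distrib_left sum_distrib_right
  by (rule sum.cong) (auto simp: algebra_simps)

lemma wedge_Amat_Amat:
  assumes "k \<noteq> j" "k \<noteq> i" "y \<in> U"
  shows "wedge (Amat bf U f \<alpha> j k) (Amat bf U f \<alpha> k i) m r s y =
     twist (bf (\<alpha> j) (\<alpha> k)) * twist (bf (\<alpha> k) (\<alpha> i)) * ser_mult (f (\<alpha> j - \<alpha> k)) (f (\<alpha> k - \<alpha> i)) m y *
     (dlogZ (\<alpha> j - \<alpha> k) r y * dlogZ (\<alpha> k - \<alpha> i) s y - dlogZ (\<alpha> j - \<alpha> k) s y * dlogZ (\<alpha> k - \<alpha> i) r y)"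
proof -
  have "wedge (Amat bf U f \<alpha> j k) (Amat bf U f \<alpha> k i) m r s y =
    wedge (\<lambda>m t y. twist (bf (\<alpha> j) (\<alpha> k)) * f (\<alpha> j - \<alpha> k) m y * dlogZ (\<alpha> j - \<alpha> k) t y)
          (\<lambda>m t y. twist (bf (\<alpha> k) (\<alpha> i)) * f (\<alpha> k - \<alpha> i) m y * dlogZ (\<alpha> k - \<alpha> i) t y) m r s y"
    unfolding wedge_def using assms by (simp add: Amat_apply)
  then show ?thesis by (simp only: wedge_mult_dlogZ)
qed

lemma ext_d_Amat:
  assumes U_open: "open U" and f_in_R: "\<forall>a. a \<noteq> 0 \<longrightarrow> (\<forall>m. holo_on U (f a m))"
    and indep: "lin_indep_R \<alpha>" and ij: "i \<noteq> j" and y: "y \<in> U" and Za: "Zc (\<alpha> j - \<alpha> i) y \<noteq> 0"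
  shows "ext_d (Amat bf U f \<alpha> j i) m r s y = twist (bf (\<alpha> j) (\<alpha> i)) *
           (cpartial r (f (\<alpha> j - \<alpha> i) m) y * dlogZ (\<alpha> j - \<alpha> i) s y
            - cpartial s (f (\<alpha> j - \<alpha> i) m) y * dlogZ (\<alpha> j - \<alpha> i) r y)"
proof -
  let ?A = "\<lambda>m t x. twist (bf (\<alpha> j) (\<alpha> i)) * f (\<alpha> j - \<alpha> i) m x * dlogZ (\<alpha> j - \<alpha> i) t x"
  have "cpartial r' (Amat bf U f \<alpha> j i m t) y = cpartial r' (?A m t) y" for r' t
    using ij by (intro cpartial_cong_open[OF U_open y]) (simp add: Amat_apply)
  then have "ext_d (Amat bf U f \<alpha> j i) m r s y = ext_d ?A m r s y"
    by (simp add: ext_d_def)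
  moreover have "holo_on U (f (\<alpha> j - \<alpha> i) m)"
    using f_in_R lin_indep_R_inj[OF indep ij[symmetric]] by simp
  ultimately show ?thesis
    using ext_d_mult_dlogZ[OF _ y Za] by simp
qed

lemma curv_in_sp2_if_lenG_ge:
  fixes \<alpha> :: "'n::finite \<Rightarrow> int^'n"
  assumes U_open: "open U" and f_len: "\<forall>a. a \<noteq> 0 \<longrightarrow> in_sp U (lenG a) (f a)"
    and long: "p \<le> lenG (\<alpha> j - \<alpha> i)"
  shows "in_sp2 U p (curv bf U f \<alpha> j i)"
  unfolding in_sp2_def
proof (intro allI impI ballI)
  fix m :: "'n mono" and r s :: 'n and x assume mp: "mdeg m < p" and x: "x \<in> U"
  have "cpartial r' (Amat bf U f \<alpha> j i m t) x = cpartial r' (\<lambda>_. 0) x" for r' t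
    using Amat_eq_0_below_lenG[OF f_len _] mp long by (intro cpartial_cong_open[OF U_open x]) auto
  then have "ext_d (Amat bf U f \<alpha> j i) m r s x = 0"
    by (simp add: ext_d_def cpartial_def)
  moreover have "wedge (Amat bf U f \<alpha> j q) (Amat bf U f \<alpha> q i) m r s x = 0" for q
  proof (rule wedge_eq_0_below_degree)
    show "mdeg m < lenG (\<alpha> j - \<alpha> q) + lenG (\<alpha> q - \<alpha> i)"
      using lenG_add_le[of "\<alpha> j - \<alpha> q" "\<alpha> q - \<alpha> i"] mp long by simp
  qed (rule Amat_eq_0_below_lenG[OF f_len x], assumption)+
  ultimately show "curv bf U f \<alpha> j i m r s x = 0"
    by (simp add: curv_def)
qed

section \<open>Cancellation through the Joyce PDE\<close>

definition joyce_term ::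
    "(int^('n::finite) \<Rightarrow> int^'n \<Rightarrow> int) \<Rightarrow> (int^'n \<Rightarrow> 'n ser) \<Rightarrow> int^'n \<Rightarrow> 'n mono \<Rightarrow> 'n
       \<Rightarrow> complex^'n \<Rightarrow> int^'n \<Rightarrow> complex" where
  "joyce_term bf f a m t x b =
     sgnpow (bf b (a - b)) * of_int (bf b (a - b)) * ser_mult (f b) (f (a - b)) m x * dlogZ b t x"

lemma joyce_term_pair:
  assumes "skew_bilinear bf" "b + c = a"
  shows "joyce_term bf f a m t x b + joyce_term bf f a m t x c =
           twist (bf b c) * ser_mult (f b) (f c) m x * (dlogZ b t x - dlogZ c t x)"
proof -
  have "a - b = c" "a - c = b" using assms(2) by auto
  then show ?thesis
    unfolding joyce_term_def twist_def[symmetric]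
    by (simp add: skew_bilinear_commute[OF assms(1), of b c] twist_uminus ser_mult_commute[of "f c"]
        algebra_simps)
qed

text \<open>Under (V), below degree p only the splittings of \<alpha> j - \<alpha> i through some \<alpha> k survive
  in the Joyce PDE; linear independence makes these splittings pairwise distinct.\<close>

lemma joyce_pde_truncated:
  assumes pde: "joyce_pde bf U f" and indep: "lin_indep_R \<alpha>" and ij: "i \<noteq> j"
    and y: "y \<in> U" and mp: "mdeg m < p"
    and V: "\<forall>b c. b \<noteq> 0 \<longrightarrow> c \<noteq> 0 \<longrightarrow> b + c = \<alpha> j - \<alpha> i \<longrightarrow>
          \<not> (\<exists>k. k \<noteq> i \<and> k \<noteq> j \<and>
                 ((b, c) = (\<alpha> j - \<alpha> k, \<alpha> k - \<alpha> i) \<or>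
                  (b, c) = (\<alpha> k - \<alpha> i, \<alpha> j - \<alpha> k))) \<longrightarrow>
          in_sp U p (\<lambda>m x. of_int (bf b c) * ser_mult (f b) (f c) m x)"
  shows "cpartial t (f (\<alpha> j - \<alpha> i) m) y = - (\<Sum>k\<in>UNIV - {i, j}.
      joyce_term bf f (\<alpha> j - \<alpha> i) m t y (\<alpha> j - \<alpha> k) + joyce_term bf f (\<alpha> j - \<alpha> i) m t y (\<alpha> k - \<alpha> i))"
proof -
  define a where "a = \<alpha> j - \<alpha> i"
  define K where "K = UNIV - {i, j}"
  define T where "T = joyce_term bf f a m t y"
  define S1 where "S1 = (\<lambda>k. \<alpha> j - \<alpha> k) ` K"
  define S2 where "S2 = (\<lambda>k. \<alpha> k - \<alpha> i) ` K"
  have inj: "\<alpha> k = \<alpha> l \<Longrightarrow> k = l" for k l using lin_indep_R_inj[OF indep] by blast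
  have "a \<noteq> 0" using inj ij by (auto simp: a_def)
  then have "cpartial t (f a m) y = - infsum T {b. b \<noteq> 0 \<and> a - b \<noteq> 0}"
    using pde y unfolding joyce_pde_def joyce_term_def T_def by blast
  also have "infsum T {b. b \<noteq> 0 \<and> a - b \<noteq> 0} = infsum T (S1 \<union> S2)"
  proof (rule infsum_cong_neutral)
    fix b assume "b \<in> (S1 \<union> S2) - {b. b \<noteq> 0 \<and> a - b \<noteq> 0}"
    then show "T b = 0"
      using inj by (auto simp: S1_def S2_def K_def a_def)
  next
    fix b assume b: "b \<in> {b. b \<noteq> 0 \<and> a - b \<noteq> 0} - (S1 \<union> S2)"
    have "in_sp U p (\<lambda>m x. of_int (bf b (a - b)) * ser_mult (f b) (f (a - b)) m x)"
      using b by (intro V[rule_format]) (auto simp: S1_def S2_def K_def a_def)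
    then show "T b = 0"
      using mp y unfolding in_sp_def T_def joyce_term_def by auto
  qed simp
  also have "\<dots> = sum T (S1 \<union> S2)"
    by (simp add: S1_def S2_def)
  also have "\<dots> = sum T S1 + sum T S2"
  proof (rule sum.union_disjoint)
    show "S1 \<inter> S2 = {}"
      using lin_indep_R_diff_neq_diff[OF indep ij] by (auto simp: S1_def S2_def K_def)
  qed (auto simp: S1_def S2_def)
  also have "sum T S1 = (\<Sum>k\<in>K. T (\<alpha> j - \<alpha> k))"
    unfolding S1_def by (subst sum.reindex) (auto simp: inj_on_def intro: inj)
  also have "sum T S2 = (\<Sum>k\<in>K. T (\<alpha> k - \<alpha> i))"
    unfolding S2_def by (subst sum.reindex) (auto simp: inj_on_def intro: inj)
  finally show ?thesis by (simp add: a_def K_def T_def sum.distrib)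
qed

lemma curv_summand_cancel:
  fixes m :: "'n::finite mono"
  assumes form: "skew_bilinear bf"
    and f_Z: "\<forall>a. a \<noteq> 0 \<longrightarrow> ser_nonzero U (f a) \<longrightarrow> (\<forall>x\<in>U. Zc a x \<noteq> 0)"
    and indep: "lin_indep_R \<alpha>" and ki: "k \<noteq> i" and kj: "k \<noteq> j"
    and Q: "bf (\<alpha> j) (\<alpha> i) * bf (\<alpha> j - \<alpha> k) (\<alpha> k - \<alpha> i) = bf (\<alpha> j) (\<alpha> k) * bf (\<alpha> k) (\<alpha> i)"
    and y: "y \<in> U" and Za: "Zc (\<alpha> j - \<alpha> i) y \<noteq> 0"
  defines "\<beta> \<equiv> \<alpha> j - \<alpha> k" and "\<gamma> \<equiv> \<alpha> k - \<alpha> i"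
  defines "M \<equiv> ser_mult (f \<beta>) (f \<gamma>) m y"
  shows "twist (bf (\<alpha> j) (\<alpha> i)) * (twist (bf \<beta> \<gamma>) * M *
           ((dlogZ \<beta> r y - dlogZ \<gamma> r y) * dlogZ (\<beta> + \<gamma>) s y - (dlogZ \<beta> s y - dlogZ \<gamma> s y) * dlogZ (\<beta> + \<gamma>) r y))
         = twist (bf (\<alpha> j) (\<alpha> k)) * twist (bf (\<alpha> k) (\<alpha> i)) * M *
           (dlogZ \<beta> r y * dlogZ \<gamma> s y - dlogZ \<beta> s y * dlogZ \<gamma> r y)"
proof (cases "M = 0")
  case False
  then have "ser_nonzero U (f \<beta>)" "ser_nonzero U (f \<gamma>)"
    using ser_nonzero_if_ser_mult_nonzero[OF y] unfolding M_def by blast+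
  moreover have "\<beta> \<noteq> 0" "\<gamma> \<noteq> 0"
    using lin_indep_R_inj[OF indep] ki kj unfolding \<beta>_def \<gamma>_def by auto
  ultimately have "Zc \<beta> y \<noteq> 0" "Zc \<gamma> y \<noteq> 0" using f_Z y by blast+
  moreover have "\<beta> + \<gamma> = \<alpha> j - \<alpha> i" unfolding \<beta>_def \<gamma>_def by simp
  ultimately show ?thesis
    using Za dlogZ_add_wedge[of \<beta> y \<gamma> r s] twist_mult_pairing_triangle[OF form Q]
    unfolding \<beta>_def \<gamma>_def by (simp only:) (simp add: ac_simps)
qed simp

lemma curv_eq_0_where_Zc_nonzero:
  assumes form: "skew_bilinear bf" and U_open: "open U"
    and f_in_R: "\<forall>a. a \<noteq> 0 \<longrightarrow> (\<forall>m. holo_on U (f a m))"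
    and f_Z: "\<forall>a. a \<noteq> 0 \<longrightarrow> ser_nonzero U (f a) \<longrightarrow> (\<forall>x\<in>U. Zc a x \<noteq> 0)"
    and pde: "joyce_pde bf U f" and indep: "lin_indep_R \<alpha>" and ij: "i \<noteq> j"
    and Q: "\<forall>k. k \<noteq> i \<and> k \<noteq> j \<longrightarrow>
          bf (\<alpha> j) (\<alpha> i) * bf (\<alpha> j - \<alpha> k) (\<alpha> k - \<alpha> i) = bf (\<alpha> j) (\<alpha> k) * bf (\<alpha> k) (\<alpha> i)"
    and V: "\<forall>b c. b \<noteq> 0 \<longrightarrow> c \<noteq> 0 \<longrightarrow> b + c = \<alpha> j - \<alpha> i \<longrightarrow>
          \<not> (\<exists>k. k \<noteq> i \<and> k \<noteq> j \<and>
                 ((b, c) = (\<alpha> j - \<alpha> k, \<alpha> k - \<alpha> i) \<or>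
                  (b, c) = (\<alpha> k - \<alpha> i, \<alpha> j - \<alpha> k))) \<longrightarrow>
          in_sp U p (\<lambda>m x. of_int (bf b c) * ser_mult (f b) (f c) m x)"
    and y: "y \<in> U" and Za: "Zc (\<alpha> j - \<alpha> i) y \<noteq> 0" and mp: "mdeg m < p"
  shows "curv bf U f \<alpha> j i m r s y = 0"
proof -
  define K where "K = UNIV - {i, j}"
  define \<beta> where "\<beta> k = \<alpha> j - \<alpha> k" for k
  define \<gamma> where "\<gamma> k = \<alpha> k - \<alpha> i" for k
  define M where "M k = ser_mult (f (\<beta> k)) (f (\<gamma> k)) m y" for k
  define X where "X k t = twist (bf (\<beta> k) (\<gamma> k)) * M k * (dlogZ (\<beta> k) t y - dlogZ (\<gamma> k) t y)" for k t
  define W where "W k = twist (bf (\<alpha> j) (\<alpha> k)) * twist (bf (\<alpha> k) (\<alpha> i)) * M k *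
    (dlogZ (\<beta> k) r y * dlogZ (\<gamma> k) s y - dlogZ (\<beta> k) s y * dlogZ (\<gamma> k) r y)" for k
  let ?c = "twist (bf (\<alpha> j) (\<alpha> i))" and ?w = "\<lambda>t. dlogZ (\<alpha> j - \<alpha> i) t y"
  have sum_\<beta>\<gamma>: "\<beta> k + \<gamma> k = \<alpha> j - \<alpha> i" for k by (simp add: \<beta>_def \<gamma>_def)
  have partial: "cpartial t (f (\<alpha> j - \<alpha> i) m) y = - (\<Sum>k\<in>K. X k t)" for t
    unfolding joyce_pde_truncated[OF pde indep ij y mp V] K_def X_def M_def
    using joyce_term_pair[OF form sum_\<beta>\<gamma>] by (simp add: \<beta>_def \<gamma>_def)
  have wedges: "(\<Sum>q\<in>UNIV. wedge (Amat bf U f \<alpha> j q) (Amat bf U f \<alpha> q i) m r s y) = (\<Sum>k\<in>K. W k)"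
  proof -
    have "(\<Sum>q\<in>UNIV. wedge (Amat bf U f \<alpha> j q) (Amat bf U f \<alpha> q i) m r s y) =
            (\<Sum>k\<in>K. wedge (Amat bf U f \<alpha> j k) (Amat bf U f \<alpha> k i) m r s y)"
      unfolding K_def by (rule sum.mono_neutral_right) (auto simp: wedge_def Amat_def)
    then show ?thesis
      using wedge_Amat_Amat[OF _ _ y] unfolding K_def W_def M_def \<beta>_def \<gamma>_def by simp
  qed
  have cancel: "?c * (X k r * ?w s - X k s * ?w r) = W k" if "k \<in> K" for k
    using curv_summand_cancel[OF form f_Z indep _ _ _ y Za, of k m r s] Q that sum_\<beta>\<gamma>[of k]
    unfolding K_def X_def W_def M_def \<beta>_def \<gamma>_def by (simp add: algebra_simps)
  have "curv bf U f \<alpha> j i m r s y = ?c * ((- (\<Sum>k\<in>K. X k r)) * ?w s - (- (\<Sum>k\<in>K. X k s)) * ?w r) + (\<Sum>k\<in>K. W k)"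
    unfolding curv_def ext_d_Amat[OF U_open f_in_R indep ij y Za] partial wedges ..
  also have "\<dots> = (\<Sum>k\<in>K. W k - ?c * (X k r * ?w s - X k s * ?w r))"
    by (simp add: sum_subtractf sum.distrib sum_distrib_left sum_distrib_right algebra_simps)
  also have "\<dots> = 0"
    using cancel by simp
  finally show ?thesis .
qed

lemma curv_in_sp2_if_QV:
  fixes \<alpha> :: "'n::finite \<Rightarrow> int^'n"
  assumes form: "skew_bilinear bf" and U_open: "open U"
    and f_in_R: "\<forall>a. a \<noteq> 0 \<longrightarrow> (\<forall>m. holo_on U (f a m))"
    and f_Z: "\<forall>a. a \<noteq> 0 \<longrightarrow> ser_nonzero U (f a) \<longrightarrow> (\<forall>x\<in>U. Zc a x \<noteq> 0)"
    and pde: "joyce_pde bf U f" and indep: "lin_indep_R \<alpha>" and ij: "i \<noteq> j"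
    and Q: "\<forall>k. k \<noteq> i \<and> k \<noteq> j \<longrightarrow>
          bf (\<alpha> j) (\<alpha> i) * bf (\<alpha> j - \<alpha> k) (\<alpha> k - \<alpha> i) = bf (\<alpha> j) (\<alpha> k) * bf (\<alpha> k) (\<alpha> i)"
    and V: "\<forall>b c. b \<noteq> 0 \<longrightarrow> c \<noteq> 0 \<longrightarrow> b + c = \<alpha> j - \<alpha> i \<longrightarrow>
          \<not> (\<exists>k. k \<noteq> i \<and> k \<noteq> j \<and>
                 ((b, c) = (\<alpha> j - \<alpha> k, \<alpha> k - \<alpha> i) \<or>
                  (b, c) = (\<alpha> k - \<alpha> i, \<alpha> j - \<alpha> k))) \<longrightarrow>
          in_sp U p (\<lambda>m x. of_int (bf b c) * ser_mult (f b) (f c) m x)"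
  shows "in_sp2 U p (curv bf U f \<alpha> j i)"
  unfolding in_sp2_def
proof (intro allI impI ballI)
  fix m :: "'n mono" and r s :: 'n and x assume mp: "mdeg m < p" and x: "x \<in> U"
  note vanish = curv_eq_0_where_Zc_nonzero[OF form U_open f_in_R f_Z pde indep ij Q V _ _ mp]
  have a: "\<alpha> j - \<alpha> i \<noteq> 0" using lin_indep_R_inj[OF indep ij[symmetric]] by simp
  show "curv bf U f \<alpha> j i m r s x = 0"
  proof (cases "ser_nonzero U (f (\<alpha> j - \<alpha> i))")
    case True
    then show ?thesis using vanish x f_Z a by blast
  next
    case False
    define g where "g z = (\<Sum>q\<in>UNIV. wedge (Amat bf U f \<alpha> j q) (Amat bf U f \<alpha> q i) m r s z)" for z
    have "Amat bf U f \<alpha> j i = (\<lambda>m t x. 0)"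
      using False by (simp add: Amat_def fun_eq_iff)
    then have curv_eq: "curv bf U f \<alpha> j i m r s = g"
      unfolding curv_def by (simp add: g_def ext_d_def cpartial_def fun_eq_iff)
    have "continuous_on U g"
      unfolding g_def wedge_def by (intro continuous_intros Amat_continuous_on[OF f_in_R f_Z indep])
    then have "g x = 0"
      by (rule continuous_on_eq_0_off_Zc_zeros[OF U_open x _ a]) (use vanish curv_eq in blast)
    then show ?thesis by (simp add: curv_eq)
  qed
qed

theorem lemma3p6:
  fixes bf :: "int^('n::finite) \<Rightarrow> int^'n \<Rightarrow> int"
    and U :: "(complex^'n) set"
    and f :: "int^'n \<Rightarrow> 'n ser"
    and \<alpha> :: "'n \<Rightarrow> int^'n"
    and i j :: 'n
    and p :: nat
  assumes form: "skew_bilinear bf"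
    and U_open: "open U" and U_conn: "connected U"
    and f_in_R: "\<forall>a. a \<noteq> 0 \<longrightarrow> (\<forall>m. holo_on U (f a m))"
    and f_len: "\<forall>a. a \<noteq> 0 \<longrightarrow> in_sp U (lenG a) (f a)"
    and f_Z: "\<forall>a. a \<noteq> 0 \<longrightarrow> ser_nonzero U (f a) \<longrightarrow> (\<forall>x\<in>U. Zc a x \<noteq> 0)"
    and pde: "joyce_pde bf U f"
    and indep: "lin_indep_R \<alpha>"
    and ij: "i \<noteq> j"
    and p3: "3 \<le> p"
    and hyp: "p \<le> lenG (\<alpha> j - \<alpha> i) \<or>
      ((\<forall>k. k \<noteq> i \<and> k \<noteq> j \<longrightarrow>
          bf (\<alpha> j) (\<alpha> i) * bf (\<alpha> j - \<alpha> k) (\<alpha> k - \<alpha> i)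
            = bf (\<alpha> j) (\<alpha> k) * bf (\<alpha> k) (\<alpha> i)) \<and>
       (\<forall>b c. b \<noteq> 0 \<longrightarrow> c \<noteq> 0 \<longrightarrow> b + c = \<alpha> j - \<alpha> i \<longrightarrow>
          \<not> (\<exists>k. k \<noteq> i \<and> k \<noteq> j \<and>
                 ((b, c) = (\<alpha> j - \<alpha> k, \<alpha> k - \<alpha> i) \<or>
                  (b, c) = (\<alpha> k - \<alpha> i, \<alpha> j - \<alpha> k))) \<longrightarrow>
          in_sp U p (\<lambda>m x. of_int (bf b c) * ser_mult (f b) (f c) m x)))"
  shows "in_sp2 U p (curv bf U f \<alpha> j i)"
  using hyp
proof (elim disjE conjE)
  assume "p \<le> lenG (\<alpha> j - \<alpha> i)"
  then show ?thesis by (rule curv_in_sp2_if_lenG_ge[OF U_open f_len])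
qed (rule curv_in_sp2_if_QV[OF form U_open f_in_R f_Z pde indep ij])

end
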